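(* Every $d$-degenerate graph $G$ satisfies $\operatorname{tww}(G)\leq\sqrt{2d|V(G)|}+2d$.
   Context: All graphs are finite and simple. A graph $G$ is $d$-degenerate if there is a linear order $v_1,\dots,v_n$ of $V(G)$ such that each $v_i$ has at most $d$ neighbors among $v_1,\dots,v_{i-1}$. A trigraph is a graph whose edges are each colored red or black; a graph is viewed as a trigraph with all edges black. The red degree of a vertex is the number of red edges incident to it. For a partition $\mathcal{P}$ of $V(G)$, the quotient trigraph $G/\mathcal{P}$ has vertex set $\mathcal{P}$; two distinct parts $U,W$ are joined by a black edge if every pair $\{u,w\}$ with $u\in U,w\in W$ is a black edge of $G$, are non-adjacent if no such pair is an edge of $G$, and are joined by a red edge otherwise. A contraction sequence of an $n$-vertex trigraph $G$ is a sequence $\mathcal{P}_n,\dots,\mathcal{P}_1$ of partitions of $V(G)$ where $\mathcal{P}_n$ is the partition into singletons and each $\mathcal{P}_i$ arises from $\mathcal{P}_{i+1}$ by merging two parts. Its width is the maximum red degree over all $G/\mathcal{P}_i$. The twin-width $\operatorname{tww}(G)$ is the minimum width of a contraction sequence of $G$. *)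

theory Defs
  imports Complex_Main
begin

definition simple_graph :: "'a set \<Rightarrow> ('a \<Rightarrow> 'a \<Rightarrow> bool) \<Rightarrow> bool" where
  "simple_graph V E \<longleftrightarrow> finite V \<and> (\<forall>u v. E u v \<longrightarrow> E v u) \<and> (\<forall>u. \<not> E u u)
     \<and> (\<forall>u v. E u v \<longrightarrow> u \<in> V \<and> v \<in> V)"

definition degenerate :: "'a set \<Rightarrow> ('a \<Rightarrow> 'a \<Rightarrow> bool) \<Rightarrow> nat \<Rightarrow> bool" where
  "degenerate V E d \<longleftrightarrow> (\<exists>vs. distinct vs \<and> set vs = V \<and>
     (\<forall>i < length vs. card {j. j < i \<and> E (vs ! i) (vs ! j)} \<le> d))"

text \<open>In the quotient trigraph G/P of a graph G (all edges black), two distinct parts U, W are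
  joined by a red edge iff some pair is an edge and some pair is not an edge
  (i.e. neither all pairs are (black) edges, nor no pair is an edge).\<close>
definition red_edge :: "('a \<Rightarrow> 'a \<Rightarrow> bool) \<Rightarrow> 'a set \<Rightarrow> 'a set \<Rightarrow> bool" where
  "red_edge E U W \<longleftrightarrow> \<not> (\<forall>u\<in>U. \<forall>w\<in>W. E u w) \<and> \<not> (\<forall>u\<in>U. \<forall>w\<in>W. \<not> E u w)"

definition red_degree :: "('a \<Rightarrow> 'a \<Rightarrow> bool) \<Rightarrow> 'a set set \<Rightarrow> 'a set \<Rightarrow> nat" where
  "red_degree E P U = card {W \<in> P. W \<noteq> U \<and> red_edge E U W}"

definition max_red_degree :: "('a \<Rightarrow> 'a \<Rightarrow> bool) \<Rightarrow> 'a set set \<Rightarrow> nat" where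
  "max_red_degree E P = Max (insert 0 (red_degree E P ` P))"

definition contraction_sequence :: "'a set \<Rightarrow> (nat \<Rightarrow> 'a set set) \<Rightarrow> bool" where
  "contraction_sequence V P \<longleftrightarrow>
     P (card V) = (\<lambda>v. {v}) ` V \<and>
     (\<forall>i. 1 \<le> i \<and> i < card V \<longrightarrow>
        (\<exists>A\<in>P (Suc i). \<exists>B\<in>P (Suc i). A \<noteq> B \<and> P i = (P (Suc i) - {A, B}) \<union> {A \<union> B}))"

definition cs_width :: "'a set \<Rightarrow> ('a \<Rightarrow> 'a \<Rightarrow> bool) \<Rightarrow> (nat \<Rightarrow> 'a set set) \<Rightarrow> nat" where
  "cs_width V E P = Max (insert 0 ((\<lambda>i. max_red_degree E (P i)) ` {1..card V}))"

definition twin_width :: "'a set \<Rightarrow> ('a \<Rightarrow> 'a \<Rightarrow> bool) \<Rightarrow> nat" where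
  "twin_width V E = (LEAST k. \<exists>P. contraction_sequence V P \<and> cs_width V E P = k)"

end

(*
  Number the vertices 0, ..., n - 1 along a degeneracy order, so that every vertex has at most d
  neighbours of smaller index, and only ever contract intervals of consecutive vertices.  Let
  W = floor (sqrt (2 d n) + 2 d) and cover the top of the order by consecutive segments, the k-th
  from the right having (W - k) div d vertices; the choice of W makes these segments cover all n
  vertices.  First sweep from right to left, merging each vertex into the part to its right unless
  a segment boundary lies between them; then merge the remaining fewer than W parts arbitrarily.
  During the sweep a singleton part is red-adjacent only to the at most W parts that are no longer
  singletons, while a part P lying in segment k has at most d * |P| <= d * ((W - k) div d) <= W - k
  red neighbours to its left (each contains a back-neighbour of P) and at most k to its right.
  For d = 0 the graph is edgeless and every contraction sequence has width 0.
*)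
theory Submission
  imports Defs
begin

(* The partition of {..<n} into intervals cut at the positions C: a cut c separates c - 1 from c. *)
definition cut_block :: "nat \<Rightarrow> nat set \<Rightarrow> nat \<Rightarrow> nat set" where
  "cut_block n C p = {j. j < n \<and> (\<forall>c\<in>C. c \<le> p \<longleftrightarrow> c \<le> j)}"

definition cut_blocks :: "nat \<Rightarrow> nat set \<Rightarrow> nat set set" where
  "cut_blocks n C = cut_block n C ` {..<n}"

lemma cut_block_self: "p < n \<Longrightarrow> p \<in> cut_block n C p"
  by (simp add: cut_block_def)

lemma cut_block_subset: "cut_block n C p \<subseteq> {..<n}"
  by (auto simp: cut_block_def)

lemma cut_block_eq: "q \<in> cut_block n C p \<Longrightarrow> cut_block n C q = cut_block n C p"
  by (auto simp: cut_block_def)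

lemma cut_block_convex:
  assumes "i \<in> cut_block n C p" "k \<in> cut_block n C p" "i \<le> j" "j \<le> k"
  shows "j \<in> cut_block n C p"
proof -
  have "c \<le> p \<longleftrightarrow> c \<le> j" if "c \<in> C" for c
  proof -
    have "c \<le> p \<longleftrightarrow> c \<le> i" "c \<le> p \<longleftrightarrow> c \<le> k"
      using assms(1,2) that by (auto simp: cut_block_def)
    then show ?thesis
      using assms(3,4) by linarith
  qed
  moreover have "j < n"
    using assms(2,4) by (simp add: cut_block_def)
  ultimately show ?thesis
    by (simp add: cut_block_def)
qed

lemma cut_block_singleton:
  assumes "p < n" "0 < p \<Longrightarrow> p \<in> C" "Suc p < n \<Longrightarrow> Suc p \<in> C"
  shows "cut_block n C p = {p}"
proof -
  have "j = p" if "j \<in> cut_block n C p" for j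
  proof -
    have "j < n" and sep: "\<And>c. c \<in> C \<Longrightarrow> c \<le> p \<longleftrightarrow> c \<le> j"
      using that by (auto simp: cut_block_def)
    moreover have "0 < p \<Longrightarrow> p \<le> j"
      using assms(2) sep by blast
    moreover have "Suc p < n \<Longrightarrow> \<not> Suc p \<le> j"
      using assms(3) sep[of "Suc p"] by simp
    ultimately show "j = p"
      by linarith
  qed
  then show ?thesis
    using cut_block_self[OF assms(1)] by blast
qed

lemma finite_cut_blocks: "finite (cut_blocks n C)"
  by (simp add: cut_blocks_def)

lemma cut_blocks_subset: "X \<in> cut_blocks n C \<Longrightarrow> X \<subseteq> {..<n}"
  using cut_block_subset by (auto simp: cut_blocks_def)

lemma finite_cut_block: "X \<in> cut_blocks n C \<Longrightarrow> finite X"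
  using finite_subset[OF cut_blocks_subset finite_lessThan] .

lemma cut_blocks_eq:
  assumes "X \<in> cut_blocks n C" "q \<in> X"
  shows "X = cut_block n C q"
proof -
  obtain p where "X = cut_block n C p"
    using assms(1) by (auto simp: cut_blocks_def)
  then show ?thesis
    using cut_block_eq[of q n C p] assms(2) by simp
qed

lemma cut_blocks_disjoint:
  assumes "X \<in> cut_blocks n C" "Y \<in> cut_blocks n C" "X \<noteq> Y"
  shows "X \<inter> Y = {}"
proof (rule ccontr)
  assume "X \<inter> Y \<noteq> {}"
  then obtain q where "q \<in> X" "q \<in> Y"
    by blast
  then show False
    using cut_blocks_eq[OF assms(1) \<open>q \<in> X\<close>] cut_blocks_eq[OF assms(2) \<open>q \<in> Y\<close>] assms(3)
    by simp
qed

lemma cut_blocks_convex: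
  assumes "X \<in> cut_blocks n C" "i \<in> X" "k \<in> X" "i \<le> j" "j \<le> k"
  shows "j \<in> X"
proof -
  have "X = cut_block n C i"
    using assms(1,2) by (rule cut_blocks_eq)
  then show ?thesis
    using cut_block_convex[of i n C i k j] assms(2-5) by simp
qed

lemma Min_cut_blocks_in:
  assumes "X \<in> cut_blocks n C"
  shows "Min X \<in> X"
proof (rule Min_in)
  show "finite X"
    using assms by (rule finite_cut_block)
  show "X \<noteq> {}"
    using assms cut_block_self by (auto simp: cut_blocks_def)
qed

lemma Min_cut_blocks_in_cuts:
  assumes X: "X \<in> cut_blocks n C"
  shows "Min X \<in> insert 0 C"
proof (cases "Min X = 0")
  case False
  define p where "p = Min X"
  have "p - 1 \<notin> X"
  proof
    assume "p - 1 \<in> X"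
    then have "p \<le> p - 1"
      unfolding p_def by (rule Min_le[OF finite_cut_block[OF X]])
    then show False
      using False p_def by simp
  qed
  moreover have "X = cut_block n C p"
    unfolding p_def using cut_blocks_eq[OF X Min_cut_blocks_in[OF X]] .
  moreover have "p < n"
    unfolding p_def using Min_cut_blocks_in[OF X] cut_blocks_subset[OF X] by auto
  ultimately obtain c where "c \<in> C" "c \<le> p \<longleftrightarrow> \<not> c \<le> p - 1"
    by (auto simp: cut_block_def)
  then have "c = p"
    by linarith
  then show ?thesis
    using \<open>c \<in> C\<close> p_def by simp
qed simp

lemma inj_on_Min_cut_blocks: "inj_on Min (cut_blocks n C)"
proof (rule inj_onI)
  fix X Y
  assume X: "X \<in> cut_blocks n C" and Y: "Y \<in> cut_blocks n C" and "Min X = Min Y"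
  then have "Min X \<in> X \<inter> Y"
    using Min_cut_blocks_in[OF X] Min_cut_blocks_in[OF Y] by simp
  then show "X = Y"
    using cut_blocks_disjoint[OF X Y] by blast
qed

lemma card_cut_blocks_Min_le:
  assumes "finite C"
  shows "card {X \<in> cut_blocks n C. P (Min X)} \<le> card {c \<in> insert 0 C. P c}"
proof (rule card_inj_on_le)
  show "inj_on Min {X \<in> cut_blocks n C. P (Min X)}"
    using inj_on_Min_cut_blocks by (rule inj_on_subset) blast
  show "Min ` {X \<in> cut_blocks n C. P (Min X)} \<subseteq> {c \<in> insert 0 C. P c}"
    using Min_cut_blocks_in_cuts by fastforce
  show "finite {c \<in> insert 0 C. P c}"
    using assms by simp
qed

lemma card_cut_blocks_le:
  assumes "finite C"
  shows "card (cut_blocks n C) \<le> card C + 1"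
proof -
  have "card (cut_blocks n C) \<le> card (insert 0 C)"
    using card_cut_blocks_Min_le[OF assms, of n "\<lambda>_. True"] by (simp add: insert_compr[symmetric])
  also have "\<dots> \<le> card C + 1"
    using assms by (simp add: card_insert_if)
  finally show ?thesis .
qed

lemma cut_block_remove_cut_merge:
  assumes c: "c \<in> C" "0 < c"
  shows "cut_block n (C - {c}) (c - 1) = cut_block n C (c - 1) \<union> cut_block n C c"
proof (rule set_eqI)
  fix j
  have split: "(\<forall>x\<in>C. P x) \<longleftrightarrow> P c \<and> (\<forall>x\<in>C - {c}. P x)" for P
    using c(1) by blast
  have "(\<forall>c'\<in>C - {c}. c' \<le> c - 1 \<longleftrightarrow> c' \<le> j) \<longleftrightarrow>
        (\<forall>c'\<in>C. c' \<le> c - 1 \<longleftrightarrow> c' \<le> j) \<or> (\<forall>c'\<in>C. c' \<le> c \<longleftrightarrow> c' \<le> j)"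
  proof (cases "j < c")
    case True
    then have "c \<le> c - 1 \<longleftrightarrow> c \<le> j" "\<not> (c \<le> c \<longleftrightarrow> c \<le> j)"
      using c(2) by linarith+
    then show ?thesis
      unfolding split[of "\<lambda>c'. c' \<le> c - 1 \<longleftrightarrow> c' \<le> j"] split[of "\<lambda>c'. c' \<le> c \<longleftrightarrow> c' \<le> j"]
      by blast
  next
    case False
    have "c' \<le> c - 1 \<longleftrightarrow> c' \<le> c" if "c' \<in> C - {c}" for c'
      using that c(2) by auto
    moreover have "\<not> (c \<le> c - 1 \<longleftrightarrow> c \<le> j)" "c \<le> c \<longleftrightarrow> c \<le> j"
      using False c(2) by linarith+
    ultimately show ?thesis
      unfolding split[of "\<lambda>c'. c' \<le> c - 1 \<longleftrightarrow> c' \<le> j"] split[of "\<lambda>c'. c' \<le> c \<longleftrightarrow> c' \<le> j"]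
      by simp
  qed
  then show "j \<in> cut_block n (C - {c}) (c - 1) \<longleftrightarrow> j \<in> cut_block n C (c - 1) \<union> cut_block n C c"
    by (auto simp: cut_block_def)
qed

lemma cut_block_remove_cut_other:
  assumes c: "c \<in> C" "0 < c"
    and p: "p < n" "p \<notin> cut_block n C (c - 1)" "p \<notin> cut_block n C c"
  shows "cut_block n (C - {c}) p = cut_block n C p"
proof
  show "cut_block n (C - {c}) p \<subseteq> cut_block n C p"
  proof
    fix j
    assume "j \<in> cut_block n (C - {c}) p"
    then have "j < n" and sep: "\<And>c'. c' \<in> C \<Longrightarrow> c' \<noteq> c \<Longrightarrow> c' \<le> p \<longleftrightarrow> c' \<le> j"
      by (auto simp: cut_block_def)
    obtain c1 where c1: "c1 \<in> C" "c1 \<le> c - 1 \<longleftrightarrow> \<not> c1 \<le> p"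
      using p(1,2) by (auto simp: cut_block_def)
    obtain c2 where c2: "c2 \<in> C" "c2 \<le> c \<longleftrightarrow> \<not> c2 \<le> p"
      using p(1,3) by (auto simp: cut_block_def)
    have "c1 \<noteq> c \<Longrightarrow> c1 \<le> p \<longleftrightarrow> c1 \<le> j" "c2 \<noteq> c \<Longrightarrow> c2 \<le> p \<longleftrightarrow> c2 \<le> j"
      using sep c1(1) c2(1) by blast+
    then have "c \<le> p \<longleftrightarrow> c \<le> j"
      using c1(2) c2(2) c(2) by arith
    then show "j \<in> cut_block n C p"
      using \<open>j < n\<close> sep by (auto simp: cut_block_def)
  qed
qed (auto simp: cut_block_def)

lemma cut_blocks_remove_cut_eq:
  assumes c: "c \<in> C" "0 < c" "c < n"
  defines "A \<equiv> cut_block n C (c - 1)" and "B \<equiv> cut_block n C c"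
  shows "cut_blocks n (C - {c}) = (cut_blocks n C - {A, B}) \<union> {A \<union> B}"
proof
  have merge: "cut_block n (C - {c}) (c - 1) = A \<union> B"
    unfolding A_def B_def using c(1,2) by (rule cut_block_remove_cut_merge)
  have other: "cut_block n (C - {c}) p = cut_block n C p" if "p < n" "p \<notin> A \<union> B" for p
    using cut_block_remove_cut_other[OF c(1,2)] that unfolding A_def B_def by blast
  show "cut_blocks n (C - {c}) \<subseteq> (cut_blocks n C - {A, B}) \<union> {A \<union> B}"
  proof
    fix X
    assume "X \<in> cut_blocks n (C - {c})"
    then obtain p where p: "p < n" "X = cut_block n (C - {c}) p"
      by (auto simp: cut_blocks_def)
    show "X \<in> (cut_blocks n C - {A, B}) \<union> {A \<union> B}"
    proof (cases "p \<in> A \<union> B")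
      case True
      then show ?thesis
        using p(2) merge cut_block_eq[of p n "C - {c}" "c - 1"] by simp
    next
      case False
      then have "X = cut_block n C p"
        using p other by simp
      moreover have "X \<noteq> A" "X \<noteq> B"
        using False \<open>X = cut_block n C p\<close> cut_block_self[OF p(1)] by auto
      moreover have "cut_block n C p \<in> cut_blocks n C"
        using p(1) by (simp add: cut_blocks_def)
      ultimately show ?thesis
        by simp
    qed
  qed
  show "(cut_blocks n C - {A, B}) \<union> {A \<union> B} \<subseteq> cut_blocks n (C - {c})"
  proof
    fix X
    assume X: "X \<in> (cut_blocks n C - {A, B}) \<union> {A \<union> B}"
    show "X \<in> cut_blocks n (C - {c})"
    proof (cases "X = A \<union> B")
      case True
      moreover have "c - 1 < n"
        using c(3) by simp
      ultimately show ?thesis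
        using merge unfolding cut_blocks_def by (metis image_eqI lessThan_iff)
    next
      case False
      then have "X \<in> cut_blocks n C" "X \<noteq> A" "X \<noteq> B"
        using X by auto
      then obtain p where p: "p < n" "X = cut_block n C p"
        by (auto simp: cut_blocks_def)
      have "p \<notin> A" "p \<notin> B"
        using \<open>X \<noteq> A\<close> \<open>X \<noteq> B\<close> p(2) cut_block_eq[of p n C "c - 1"] cut_block_eq[of p n C c]
        unfolding A_def B_def by auto
      then have "X = cut_block n (C - {c}) p"
        using p(2) other[OF p(1)] by simp
      then show ?thesis
        using p(1) by (simp add: cut_blocks_def)
    qed
  qed
qed

lemma cut_blocks_remove_cut:
  assumes c: "c \<in> C" "0 < c" "c < n"
  shows "\<exists>A\<in>cut_blocks n C. \<exists>B\<in>cut_blocks n C.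
           A \<noteq> B \<and> cut_blocks n (C - {c}) = (cut_blocks n C - {A, B}) \<union> {A \<union> B}"
proof -
  let ?A = "cut_block n C (c - 1)" and ?B = "cut_block n C c"
  have blocks: "?A \<in> cut_blocks n C" "?B \<in> cut_blocks n C"
    using c(3) by (auto simp: cut_blocks_def)
  have "c \<notin> ?A"
    using c(1,2) by (auto simp: cut_block_def intro!: bexI[of _ c])
  then have "?A \<noteq> ?B"
    using cut_block_self[OF c(3)] by blast
  with blocks cut_blocks_remove_cut_eq[OF c] show ?thesis
    by blast
qed

lemma cut_blocks_all_cuts: "cut_blocks n {1..<n} = (\<lambda>p. {p}) ` {..<n}"
  unfolding cut_blocks_def using cut_block_singleton[of _ n "{1..<n}"] by simp

lemma contraction_sequence_cut_blocks:
  assumes start: "S 0 = {1..<n}"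
    and step: "\<And>r. Suc r < n \<Longrightarrow> \<exists>c\<in>S r. S (Suc r) = S r - {c}"
  shows "contraction_sequence {..<n} (\<lambda>i. cut_blocks n (S (n - i)))"
  unfolding contraction_sequence_def
proof (intro conjI allI impI)
  have cuts: "S r \<subseteq> {1..<n}" if "r < n" for r
    using that
  proof (induction r)
    case (Suc r)
    then show ?case
      using step by force
  qed (simp add: start)
  show "cut_blocks n (S (n - card {..<n})) = (\<lambda>v. {v}) ` {..<n}"
    using cut_blocks_all_cuts[of n] by (simp add: start)
  fix i
  assume "1 \<le> i \<and> i < card {..<n}"
  then have i: "Suc (n - Suc i) = n - i" "Suc (n - Suc i) < n"
    by auto
  then obtain c where "c \<in> S (n - Suc i)" "S (n - i) = S (n - Suc i) - {c}"
    using step by metis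
  moreover have "c \<in> {1..<n}"
    using cuts[of "n - Suc i"] i(2) \<open>c \<in> S (n - Suc i)\<close> by auto
  ultimately show "\<exists>A\<in>cut_blocks n (S (n - Suc i)). \<exists>B\<in>cut_blocks n (S (n - Suc i)).
      A \<noteq> B \<and> cut_blocks n (S (n - i)) = (cut_blocks n (S (n - Suc i)) - {A, B}) \<union> {A \<union> B}"
    using cut_blocks_remove_cut[of c "S (n - Suc i)" n] by simp
qed

lemma contraction_sequence_image:
  assumes inj: "inj_on f X" and seq: "contraction_sequence X Q" and parts: "\<And>i. Q i \<subseteq> Pow X"
  shows "contraction_sequence (f ` X) (\<lambda>i. (`) f ` Q i)"
  unfolding contraction_sequence_def
proof (intro conjI allI impI)
  have card: "card (f ` X) = card X"
    using inj by (rule card_image)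
  have inj_parts: "inj_on ((`) f) (Pow X)"
    using inj by (rule inj_on_image_Pow)
  have "Q (card X) = (\<lambda>v. {v}) ` X"
    using seq by (simp add: contraction_sequence_def)
  then show "(`) f ` Q (card (f ` X)) = (\<lambda>v. {v}) ` f ` X"
    by (simp add: card image_image)
  fix i
  assume "1 \<le> i \<and> i < card (f ` X)"
  then have "\<exists>A\<in>Q (Suc i). \<exists>B\<in>Q (Suc i). A \<noteq> B \<and> Q i = (Q (Suc i) - {A, B}) \<union> {A \<union> B}"
    using seq card by (simp add: contraction_sequence_def)
  then obtain A B where AB: "A \<in> Q (Suc i)" "B \<in> Q (Suc i)" "A \<noteq> B"
    and merge: "Q i = (Q (Suc i) - {A, B}) \<union> {A \<union> B}"
    by blast
  have AB_parts: "A \<in> Pow X" "B \<in> Pow X"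
    using AB(1,2) parts by blast+
  have "f ` A \<noteq> f ` B"
    using inj_on_contraD[OF inj_parts AB(3) AB_parts] .
  moreover have "(`) f ` (Q (Suc i) - {A, B}) = (`) f ` Q (Suc i) - {f ` A, f ` B}"
  proof -
    have "Q (Suc i) - {A, B} \<subseteq> Pow X" "{A, B} \<subseteq> Pow X"
      using parts[of "Suc i"] AB_parts by blast+
    then show ?thesis
      using inj_on_image_set_diff[OF inj_parts] by simp
  qed
  then have "(`) f ` Q i = ((`) f ` Q (Suc i) - {f ` A, f ` B}) \<union> {f ` A \<union> f ` B}"
    unfolding merge by (simp add: image_Un)
  moreover have "f ` A \<in> (`) f ` Q (Suc i)" "f ` B \<in> (`) f ` Q (Suc i)"
    using AB(1,2) by simp_all
  ultimately show "\<exists>A'\<in>(`) f ` Q (Suc i). \<exists>B'\<in>(`) f ` Q (Suc i). A' \<noteq> B' \<and>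
      (`) f ` Q i = ((`) f ` Q (Suc i) - {A', B'}) \<union> {A' \<union> B'}"
    by (rule_tac x = "f ` A" in bexI, rule_tac x = "f ` B" in bexI) auto
qed

lemma red_degree_image:
  assumes inj: "inj_on f X" and parts: "Q \<subseteq> Pow X" and U: "U \<in> Q"
  shows "red_degree E ((`) f ` Q) (f ` U) = red_degree (\<lambda>a b. E (f a) (f b)) Q U"
proof -
  have inj_parts: "inj_on ((`) f) Q"
    using inj_on_image_Pow[OF inj] parts by (rule inj_on_subset)
  have "f ` W \<noteq> f ` U \<and> red_edge E (f ` U) (f ` W) \<longleftrightarrow>
      W \<noteq> U \<and> red_edge (\<lambda>a b. E (f a) (f b)) U W" if "W \<in> Q" for W
    using inj_on_contraD[OF inj_parts _ that U] by (auto simp: red_edge_def)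
  then have "{W' \<in> (`) f ` Q. W' \<noteq> f ` U \<and> red_edge E (f ` U) W'} =
      (`) f ` {W \<in> Q. W \<noteq> U \<and> red_edge (\<lambda>a b. E (f a) (f b)) U W}"
    by blast
  then show ?thesis
    unfolding red_degree_def using inj_parts by (simp add: card_image inj_on_subset)
qed

lemma twin_width_le:
  assumes seq: "contraction_sequence V P" and fin: "\<And>i. finite (P i)"
    and red: "\<And>i U. 1 \<le> i \<Longrightarrow> i \<le> card V \<Longrightarrow> U \<in> P i \<Longrightarrow> red_degree E (P i) U \<le> k"
  shows "twin_width V E \<le> k"
proof -
  have "max_red_degree E (P i) \<le> k" if "i \<in> {1..card V}" for i
    unfolding max_red_degree_def using fin red that by (auto intro!: Max.boundedI)
  then have "cs_width V E P \<le> k"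
    unfolding cs_width_def by (auto intro!: Max.boundedI)
  moreover have "twin_width V E \<le> cs_width V E P"
    unfolding twin_width_def using seq by (auto intro: Least_le)
  ultimately show ?thesis
    by simp
qed

lemma twin_width_le_cut_sequence:
  assumes f: "bij_betw f {..<n} V"
    and start: "S 0 = {1..<n}" and step: "\<And>r. Suc r < n \<Longrightarrow> \<exists>c\<in>S r. S (Suc r) = S r - {c}"
    and red: "\<And>r B. B \<in> cut_blocks n (S r) \<Longrightarrow>
      red_degree (\<lambda>a b. E (f a) (f b)) (cut_blocks n (S r)) B \<le> k"
  shows "twin_width V E \<le> k"
proof (rule twin_width_le)
  have inj: "inj_on f {..<n}" and V: "V = f ` {..<n}"
    using f by (auto simp: bij_betw_def)
  have parts: "cut_blocks n C \<subseteq> Pow {..<n}" for C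
    using cut_blocks_subset by blast
  show "contraction_sequence V (\<lambda>i. (`) f ` cut_blocks n (S (n - i)))"
    unfolding V using contraction_sequence_image[OF inj contraction_sequence_cut_blocks[OF start step] parts] .
  show "finite ((`) f ` cut_blocks n (S (n - i)))" for i
    by (simp add: finite_cut_blocks)
  show "red_degree E ((`) f ` cut_blocks n (S (n - i))) U \<le> k"
    if "U \<in> (`) f ` cut_blocks n (S (n - i))" for i U
    using that red red_degree_image[OF inj parts] by auto
qed

lemma red_degree_le_card:
  assumes "finite P" "B \<in> P"
  shows "red_degree E P B \<le> card P - 1"
proof -
  have "red_degree E P B \<le> card (P - {B})"
    unfolding red_degree_def using assms by (intro card_mono) auto
  then show ?thesis
    using assms by simp
qed

lemma red_degree_singleton_le:
  assumes "finite P"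
  shows "red_degree E P {p} \<le> card {X \<in> P. \<not> is_singleton X}"
  unfolding red_degree_def using assms
  by (intro card_mono) (auto simp: red_edge_def is_singleton_def)

lemma red_degree_edgeless:
  assumes "\<And>u w. u \<in> U \<Longrightarrow> w \<in> \<Union>P \<Longrightarrow> \<not> E u w"
  shows "red_degree E P U = 0"
proof -
  have "{W \<in> P. W \<noteq> U \<and> red_edge E U W} = {}"
    using assms unfolding red_edge_def by blast
  then show ?thesis
    unfolding red_degree_def by (metis card.empty)
qed

lemma card_meeting_disjoint_le:
  assumes "finite S" and disjoint: "\<And>X Y. X \<in> P \<Longrightarrow> Y \<in> P \<Longrightarrow> X \<noteq> Y \<Longrightarrow> X \<inter> Y = {}"
  shows "card {X \<in> P. X \<inter> S \<noteq> {}} \<le> card S"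
proof -
  define g where "g X = (SOME w. w \<in> X \<inter> S)" for X
  have g: "g X \<in> X \<inter> S" if "X \<inter> S \<noteq> {}" for X
    unfolding g_def using that by (metis ex_in_conv someI_ex)
  have "inj_on g {X \<in> P. X \<inter> S \<noteq> {}}"
  proof (rule inj_onI)
    fix X Y
    assume X: "X \<in> {X \<in> P. X \<inter> S \<noteq> {}}" and Y: "Y \<in> {X \<in> P. X \<inter> S \<noteq> {}}" and "g X = g Y"
    then have "g X \<in> X \<inter> Y"
      using g[of X] g[of Y] X Y by auto
    then show "X = Y"
      using disjoint X Y by blast
  qed
  moreover have "g ` {X \<in> P. X \<inter> S \<noteq> {}} \<subseteq> S"
    using g by blast
  ultimately show ?thesis
    using assms(1) by (rule card_inj_on_le)
qed

definition back_neighbours :: "(nat \<Rightarrow> nat \<Rightarrow> bool) \<Rightarrow> nat set \<Rightarrow> nat set" where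
  "back_neighbours E B = {w. \<exists>u\<in>B. w < u \<and> E u w}"

lemma card_back_neighbours_le:
  assumes "finite B" and deg: "\<And>u. u \<in> B \<Longrightarrow> card {w. w < u \<and> E u w} \<le> d"
  shows "card (back_neighbours E B) \<le> d * card B"
proof -
  have "back_neighbours E B = (\<Union>u\<in>B. {w. w < u \<and> E u w})"
    unfolding back_neighbours_def by auto
  then have "card (back_neighbours E B) \<le> (\<Sum>u\<in>B. card {w. w < u \<and> E u w})"
    using card_UN_le[OF assms(1)] by simp
  also have "\<dots> \<le> d * card B"
    using sum_bounded_above[of B "\<lambda>u. card {w. w < u \<and> E u w}" d] deg by (simp add: mult.commute)
  finally show ?thesis .
qed

lemma finite_back_neighbours: "finite B \<Longrightarrow> finite (back_neighbours E B)"
proof -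
  assume "finite B"
  then have "back_neighbours E B \<subseteq> {..<Max B}"
    unfolding back_neighbours_def using Max_ge less_le_trans by fastforce
  then show ?thesis
    using finite_subset finite_lessThan by metis
qed

lemma red_edge_cut_blocks_cases:
  assumes B: "B \<in> cut_blocks n C" and p: "p \<in> B"
    and X: "X \<in> cut_blocks n C" "X \<noteq> B" and red: "red_edge E B X"
  shows "X \<inter> back_neighbours E B \<noteq> {} \<or> p < Min X"
proof -
  obtain u w where uw: "u \<in> B" "w \<in> X" "E u w"
    using red unfolding red_edge_def by blast
  have disj: "X \<inter> B = {}"
    using cut_blocks_disjoint[OF X(1) B X(2)] .
  show ?thesis
  proof (cases "w < u")
    case True
    then have "w \<in> back_neighbours E B"
      using uw unfolding back_neighbours_def by blast
    then show ?thesis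
      using uw(2) by blast
  next
    case False
    have "u < Min X"
    proof (rule ccontr)
      assume "\<not> u < Min X"
      then have "u \<in> X"
        using cut_blocks_convex[OF X(1) Min_cut_blocks_in[OF X(1)] uw(2)] False by simp
      then show False
        using uw(1) disj by blast
    qed
    moreover have "\<not> Min X \<le> p"
    proof
      assume "Min X \<le> p"
      then have "Min X \<in> B"
        using cut_blocks_convex[OF B uw(1) p] \<open>u < Min X\<close> by simp
      then show False
        using Min_cut_blocks_in[OF X(1)] disj by blast
    qed
    ultimately show ?thesis
      by simp
  qed
qed

lemma red_degree_cut_blocks_le:
  assumes B: "B \<in> cut_blocks n C" and p: "p \<in> B" and "finite C"
  shows "red_degree E (cut_blocks n C) B \<le> card (back_neighbours E B) + card {c \<in> C. p < c}"
proof -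
  let ?back = "{X \<in> cut_blocks n C. X \<inter> back_neighbours E B \<noteq> {}}"
  let ?right = "{X \<in> cut_blocks n C. p < Min X}"
  have "{X \<in> cut_blocks n C. X \<noteq> B \<and> red_edge E B X} \<subseteq> ?back \<union> ?right"
    using red_edge_cut_blocks_cases[OF B p] by blast
  then have "red_degree E (cut_blocks n C) B \<le> card (?back \<union> ?right)"
    unfolding red_degree_def by (intro card_mono) (simp_all add: finite_cut_blocks)
  also have "\<dots> \<le> card ?back + card ?right"
    by (rule card_Un_le)
  finally have "red_degree E (cut_blocks n C) B \<le> card ?back + card ?right" .
  moreover have "card ?back \<le> card (back_neighbours E B)"
    using finite_back_neighbours[OF finite_cut_block[OF B]] cut_blocks_disjoint
    by (rule card_meeting_disjoint_le)
  moreover have "card ?right \<le> card {c \<in> C. p < c}"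
  proof -
    have "{c \<in> insert 0 C. p < c} = {c \<in> C. p < c}"
      by auto
    then show ?thesis
      using card_cut_blocks_Min_le[OF \<open>finite C\<close>, of n "\<lambda>m. p < m"] by simp
  qed
  ultimately show ?thesis
    by linarith
qed

primrec sweep_cuts :: "nat \<Rightarrow> nat set \<Rightarrow> nat \<Rightarrow> nat set" where
  "sweep_cuts n K 0 = {1..<n}"
| "sweep_cuts n K (Suc r) =
    (if sweep_cuts n K r - K \<noteq> {} then sweep_cuts n K r - {Max (sweep_cuts n K r - K)}
     else sweep_cuts n K r - {Max (sweep_cuts n K r)})"

definition phase_cuts :: "nat \<Rightarrow> nat set \<Rightarrow> nat \<Rightarrow> nat set" where
  "phase_cuts n K t = {c \<in> {1..<n}. c \<le> t \<or> c \<in> K}"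

lemma sweep_cuts_subset: "sweep_cuts n K r \<subseteq> {1..<n}"
  by (induction r) auto

lemma finite_sweep_cuts: "finite (sweep_cuts n K r)"
  using finite_subset[OF sweep_cuts_subset finite_atLeastLessThan] .

lemma sweep_cuts_Suc:
  assumes "sweep_cuts n K r \<noteq> {}"
  obtains c where "c \<in> sweep_cuts n K r" "sweep_cuts n K (Suc r) = sweep_cuts n K r - {c}"
proof (cases "sweep_cuts n K r - K = {}")
  case True
  show ?thesis
  proof (rule that)
    show "Max (sweep_cuts n K r) \<in> sweep_cuts n K r"
      using finite_sweep_cuts assms by (rule Max_in)
    show "sweep_cuts n K (Suc r) = sweep_cuts n K r - {Max (sweep_cuts n K r)}"
      using True by simp
  qed
next
  case False
  show ?thesis
  proof (rule that)
    have "Max (sweep_cuts n K r - K) \<in> sweep_cuts n K r - K"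
      using finite_sweep_cuts False by (intro Max_in) auto
    then show "Max (sweep_cuts n K r - K) \<in> sweep_cuts n K r"
      by blast
    show "sweep_cuts n K (Suc r) = sweep_cuts n K r - {Max (sweep_cuts n K r - K)}"
      using False by simp
  qed
qed

lemma card_sweep_cuts: "card (sweep_cuts n K r) = n - 1 - r"
proof (induction r)
  case (Suc r)
  show ?case
  proof (cases "sweep_cuts n K r = {}")
    case True
    then show ?thesis
      using Suc by (simp split: if_splits)
  next
    case False
    then obtain c where "c \<in> sweep_cuts n K r" "sweep_cuts n K (Suc r) = sweep_cuts n K r - {c}"
      by (rule sweep_cuts_Suc)
    then show ?thesis
      using Suc finite_sweep_cuts by simp
  qed
qed simp

lemma sweep_cuts_step:
  assumes "Suc r < n"
  shows "\<exists>c\<in>sweep_cuts n K r. sweep_cuts n K (Suc r) = sweep_cuts n K r - {c}"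
proof -
  have "sweep_cuts n K r \<noteq> {}"
    using card_sweep_cuts[of n K r] assms by auto
  then show ?thesis
    by (metis sweep_cuts_Suc)
qed

lemma phase_cuts_remove_Max:
  assumes "phase_cuts n K t - K \<noteq> {}"
  defines "m \<equiv> Max (phase_cuts n K t - K)"
  shows "phase_cuts n K t - {m} = phase_cuts n K (m - 1)"
proof (rule set_eqI)
  fix x
  have fin: "finite (phase_cuts n K t - K)"
    unfolding phase_cuts_def by simp
  have m: "m \<in> phase_cuts n K t - K"
    unfolding m_def using fin assms(1) by (rule Max_in)
  then have "m \<notin> K" "1 \<le> m" "m \<le> t"
    unfolding phase_cuts_def by auto
  moreover have "x \<in> phase_cuts n K t - K \<Longrightarrow> x \<le> m"
    unfolding m_def using fin by (rule Max_ge)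
  ultimately show "x \<in> phase_cuts n K t - {m} \<longleftrightarrow> x \<in> phase_cuts n K (m - 1)"
    unfolding phase_cuts_def by (cases "x \<in> K") auto
qed

lemma sweep_cuts_cases: "(\<exists>t. sweep_cuts n K r = phase_cuts n K t) \<or> sweep_cuts n K r \<subseteq> K"
proof (induction r)
  case 0
  have "sweep_cuts n K 0 = phase_cuts n K n"
    unfolding phase_cuts_def by auto
  then show ?case
    by blast
next
  case (Suc r)
  show ?case
  proof (cases "sweep_cuts n K r - K = {}")
    case True
    then have "sweep_cuts n K (Suc r) \<subseteq> K"
      by auto
    then show ?thesis ..
  next
    case False
    with Suc obtain t where t: "sweep_cuts n K r = phase_cuts n K t"
      by blast
    then have "sweep_cuts n K (Suc r) = phase_cuts n K (Max (phase_cuts n K t - K) - 1)"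
      using False phase_cuts_remove_Max[of n K t] by simp
    then show ?thesis
      by blast
  qed
qed

lemma phase_cuts_block_singleton:
  assumes X: "X \<in> cut_blocks n (phase_cuts n K t)" and "Min X < t"
  shows "X = {Min X}"
proof -
  have "Min X < n"
    using Min_cut_blocks_in[OF X] cut_blocks_subset[OF X] by auto
  then have "cut_block n (phase_cuts n K t) (Min X) = {Min X}"
    using \<open>Min X < t\<close> by (intro cut_block_singleton) (auto simp: phase_cuts_def)
  then show ?thesis
    using cut_blocks_eq[OF X Min_cut_blocks_in[OF X]] by simp
qed

locale segment_sweep =
  fixes n d W :: nat and E :: "nat \<Rightarrow> nat \<Rightarrow> bool"
  assumes back_degree: "\<And>u. u < n \<Longrightarrow> card {w. w < u \<and> E u w} \<le> d"
    and d_pos: "0 < d" and d_le_W: "d \<le> W"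
    and n_le_sum: "n \<le> (\<Sum>j<W. (W - j) div d)"
begin

definition offset :: "nat \<Rightarrow> nat" where
  "offset k = (\<Sum>j<k. (W - j) div d)"

(* Segment k is {n - offset (Suc k)..<n - offset k}; seg_cuts are the boundaries inside {1..<n}. *)
definition seg_cuts :: "nat set" where
  "seg_cuts = (\<lambda>k. n - offset k) ` {k. 0 < k \<and> offset k < n}"

lemma offset_Suc: "offset (Suc k) = offset k + (W - k) div d"
  by (simp add: offset_def)

lemma offset_mono: "a \<le> b \<Longrightarrow> offset a \<le> offset b"
  unfolding offset_def by (rule sum_mono2) auto

lemma offset_pos: "0 < k \<Longrightarrow> 0 < offset k"
proof -
  assume "0 < k"
  have "0 < W div d"
    using d_pos d_le_W by (simp add: div_greater_zero_iff)
  then have "0 < offset 1"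
    by (simp add: offset_def)
  then show ?thesis
    using offset_mono[of 1 k] \<open>0 < k\<close> by simp
qed

lemma seg_cut_indices_subset: "{k. 0 < k \<and> offset k < n} \<subseteq> {1..<W}"
proof
  fix k
  assume "k \<in> {k. 0 < k \<and> offset k < n}"
  moreover have "offset W < n \<Longrightarrow> False"
    using n_le_sum by (simp add: offset_def)
  ultimately show "k \<in> {1..<W}"
    using offset_mono[of W k] by (cases "k < W") auto
qed

lemma seg_cuts_subset: "seg_cuts \<subseteq> {1..<n}"
  unfolding seg_cuts_def using offset_pos by fastforce

lemma finite_seg_cuts: "finite seg_cuts"
  using finite_subset[OF seg_cuts_subset finite_atLeastLessThan] .

lemma card_seg_cuts: "card seg_cuts < W"
proof -
  have "card seg_cuts \<le> card {k. 0 < k \<and> offset k < n}"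
    unfolding seg_cuts_def by (rule card_image_le) (use finite_subset[OF seg_cut_indices_subset] in simp)
  also have "\<dots> \<le> card {1..<W}"
    using seg_cut_indices_subset by (rule card_mono[rotated]) simp
  finally show ?thesis
    using d_pos d_le_W by simp
qed

lemma seg_cutI: "0 < k \<Longrightarrow> offset k < n \<Longrightarrow> n - offset k \<in> seg_cuts"
  unfolding seg_cuts_def by blast

lemma segment_of_vertex:
  assumes "x < n"
  obtains i where "i < W" "n - offset (Suc i) \<le> x" "x < n - offset i"
proof -
  have W: "0 < W"
    using d_pos d_le_W by simp
  have ex: "n - x \<le> offset (Suc (W - 1))"
    using W n_le_sum by (simp add: offset_def)
  define i where "i = (LEAST i. n - x \<le> offset (Suc i))"
  have "n - x \<le> offset (Suc i)"
    unfolding i_def using ex by (rule LeastI)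
  moreover have "i < W"
    using Least_le[of "\<lambda>i. n - x \<le> offset (Suc i)", OF ex] W unfolding i_def by simp
  moreover have "offset i < n - x"
  proof (cases i)
    case 0
    then show ?thesis
      using assms by (simp add: offset_def)
  next
    case (Suc i')
    then have "\<not> n - x \<le> offset (Suc i')"
      unfolding i_def by (metis lessI not_less_Least)
    then show ?thesis
      using Suc by simp
  qed
  ultimately show ?thesis
    using that by simp
qed

lemma red_degree_phase_cuts_below:
  assumes B: "B \<in> cut_blocks n (phase_cuts n seg_cuts t)" and "Min B < t"
  shows "red_degree E (cut_blocks n (phase_cuts n seg_cuts t)) B \<le> W"
proof -
  let ?C = "phase_cuts n seg_cuts t"
  have fin: "finite ?C"
    unfolding phase_cuts_def by simp
  have "B = {Min B}"
    using B \<open>Min B < t\<close> by (rule phase_cuts_block_singleton)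
  then have "red_degree E (cut_blocks n ?C) B \<le> card {X \<in> cut_blocks n ?C. \<not> is_singleton X}"
    using red_degree_singleton_le[OF finite_cut_blocks] by metis
  also have "\<dots> \<le> card {X \<in> cut_blocks n ?C. t \<le> Min X}"
  proof (rule card_mono)
    show "{X \<in> cut_blocks n ?C. \<not> is_singleton X} \<subseteq> {X \<in> cut_blocks n ?C. t \<le> Min X}"
      using phase_cuts_block_singleton[of _ n seg_cuts t] by (force simp: is_singleton_def)
  qed (simp add: finite_cut_blocks)
  also have "\<dots> \<le> card {c \<in> insert 0 ?C. t \<le> c}"
    using fin by (rule card_cut_blocks_Min_le)
  also have "\<dots> \<le> card (insert t seg_cuts)"
    using finite_seg_cuts by (intro card_mono) (auto simp: phase_cuts_def)
  also have "\<dots> \<le> W"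
    using card_seg_cuts finite_seg_cuts by (simp add: card_insert_if)
  finally show ?thesis .
qed

lemma seg_cuts_phase_cuts: "seg_cuts \<subseteq> phase_cuts n seg_cuts t"
  using seg_cuts_subset unfolding phase_cuts_def by auto

lemma phase_cuts_block_in_segment:
  assumes B: "B \<in> cut_blocks n (phase_cuts n seg_cuts t)"
    and i: "n - offset (Suc i) \<le> Min B" "Min B < n - offset i"
  shows "B \<subseteq> {n - offset (Suc i)..<n - offset i}"
proof
  fix j
  assume "j \<in> B"
  have sep: "c \<le> Min B \<longleftrightarrow> c \<le> j" if "c \<in> phase_cuts n seg_cuts t" for c
    using that \<open>j \<in> B\<close> cut_blocks_eq[OF B Min_cut_blocks_in[OF B]] by (auto simp: cut_block_def)
  have cut: "n - offset k \<in> phase_cuts n seg_cuts t" if "0 < k" "offset k < n" for k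
    using seg_cutI[OF that] seg_cuts_phase_cuts by blast
  have "n - offset (Suc i) \<le> j"
    using sep[OF cut[of "Suc i"]] i(1) by (cases "offset (Suc i) < n") auto
  moreover have "j < n - offset i"
  proof (cases "i = 0")
    case True
    then show ?thesis
      using \<open>j \<in> B\<close> cut_blocks_subset[OF B] by (auto simp: offset_def)
  next
    case False
    moreover have "offset i < n"
      using i(2) by simp
    ultimately show ?thesis
      using sep[OF cut[of i]] i(2) by simp
  qed
  ultimately show "j \<in> {n - offset (Suc i)..<n - offset i}"
    by simp
qed

lemma card_phase_cuts_right_le:
  assumes "t \<le> p" "n - offset (Suc i) \<le> p"
  shows "card {c \<in> phase_cuts n seg_cuts t. p < c} \<le> i"
proof -
  have "{c \<in> phase_cuts n seg_cuts t. p < c} \<subseteq> (\<lambda>k. n - offset k) ` {1..i}"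
  proof
    fix c
    assume c: "c \<in> {c \<in> phase_cuts n seg_cuts t. p < c}"
    then have "c \<in> seg_cuts"
      using assms(1) unfolding phase_cuts_def by auto
    then obtain k where k: "0 < k" "c = n - offset k"
      unfolding seg_cuts_def by blast
    have "k \<le> i"
    proof (rule ccontr)
      assume "\<not> k \<le> i"
      then have "offset (Suc i) \<le> offset k"
        by (intro offset_mono) simp
      then have "n - offset k \<le> n - offset (Suc i)"
        by (rule diff_le_mono2)
      then show False
        using c k(2) assms(2) by simp
    qed
    then show "c \<in> (\<lambda>k. n - offset k) ` {1..i}"
      using k by simp
  qed
  then have "card {c \<in> phase_cuts n seg_cuts t. p < c} \<le> card ((\<lambda>k. n - offset k) ` {1..i})"
    by (rule card_mono[rotated]) simp
  also have "\<dots> \<le> card {1..i}"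
    by (rule card_image_le) simp
  finally show ?thesis
    by simp
qed

lemma red_degree_phase_cuts_above:
  assumes B: "B \<in> cut_blocks n (phase_cuts n seg_cuts t)" and "t \<le> Min B"
  shows "red_degree E (cut_blocks n (phase_cuts n seg_cuts t)) B \<le> W"
proof -
  let ?C = "phase_cuts n seg_cuts t"
  have p: "Min B \<in> B" "Min B < n"
    using Min_cut_blocks_in[OF B] cut_blocks_subset[OF B] by auto
  obtain i where i: "i < W" "n - offset (Suc i) \<le> Min B" "Min B < n - offset i"
    using segment_of_vertex[OF p(2)] .
  have "card B \<le> card {n - offset (Suc i)..<n - offset i}"
    using phase_cuts_block_in_segment[OF B i(2,3)] by (rule card_mono[rotated]) simp
  also have "\<dots> \<le> (W - i) div d"
    using offset_Suc[of i] by simp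
  finally have "d * card B \<le> d * ((W - i) div d)"
    by (rule mult_le_mono2)
  also have "\<dots> \<le> W - i"
    by simp
  finally have card_B: "d * card B \<le> W - i" .
  have "card {w. w < u \<and> E u w} \<le> d" if "u \<in> B" for u
    using back_degree cut_blocks_subset[OF B] that by (meson lessThan_iff subsetD)
  then have "card (back_neighbours E B) \<le> d * card B"
    using finite_cut_block[OF B] by (intro card_back_neighbours_le)
  moreover have "red_degree E (cut_blocks n ?C) B \<le> card (back_neighbours E B) + card {c \<in> ?C. Min B < c}"
    using B p(1) by (rule red_degree_cut_blocks_le) (simp add: phase_cuts_def)
  ultimately show ?thesis
    using card_B card_phase_cuts_right_le[OF \<open>t \<le> Min B\<close> i(2)] i(1) by linarith
qed

lemma red_degree_sweep_le:
  assumes B: "B \<in> cut_blocks n (sweep_cuts n seg_cuts r)"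
  shows "red_degree E (cut_blocks n (sweep_cuts n seg_cuts r)) B \<le> W"
  using sweep_cuts_cases[of n seg_cuts r]
proof
  assume "\<exists>t. sweep_cuts n seg_cuts r = phase_cuts n seg_cuts t"
  then obtain t where t: "sweep_cuts n seg_cuts r = phase_cuts n seg_cuts t" ..
  show ?thesis
  proof (cases "Min B < t")
    case True
    then show ?thesis
      using red_degree_phase_cuts_below[of B t] B t by simp
  next
    case False
    then show ?thesis
      using red_degree_phase_cuts_above[of B t] B t by simp
  qed
next
  assume sub: "sweep_cuts n seg_cuts r \<subseteq> seg_cuts"
  have "red_degree E (cut_blocks n (sweep_cuts n seg_cuts r)) B
      \<le> card (cut_blocks n (sweep_cuts n seg_cuts r)) - 1"
    using finite_cut_blocks B by (rule red_degree_le_card)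
  also have "\<dots> \<le> card (sweep_cuts n seg_cuts r)"
    using card_cut_blocks_le[OF finite_sweep_cuts] by (simp add: le_diff_conv)
  also have "\<dots> \<le> card seg_cuts"
    using finite_seg_cuts sub by (rule card_mono)
  finally show ?thesis
    using card_seg_cuts by simp
qed

end

lemma sum_div_lower_bound:
  fixes d W k :: nat
  assumes "0 < d" "k \<le> W"
  shows "real k * (2 * real W + 3 - 2 * real d - real k) \<le> 2 * real d * real (\<Sum>j<k. (W - j) div d)"
  using assms(2)
proof (induction k)
  case (Suc k)
  have "W - k + 1 \<le> d * ((W - k) div d) + d"
    using mult_div_mod_eq[of d "W - k"] mod_less_divisor[OF assms(1), of "W - k"] by linarith
  then have "real (W - k) + 1 \<le> real d * real ((W - k) div d) + real d"
    by (metis of_nat_1 of_nat_add of_nat_le_iff of_nat_mult)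
  moreover have "real (W - k) = real W - real k"
    using Suc.prems by simp
  ultimately show ?case
    using Suc by (simp add: algebra_simps)
qed simp

lemma sqrt_width_bound:
  fixes d n :: nat
  assumes "0 < d"
  defines "W \<equiv> nat \<lfloor>sqrt (2 * real d * real n) + 2 * real d\<rfloor>"
  shows "d \<le> W" and "n \<le> (\<Sum>j<W. (W - j) div d)"
    and "real W \<le> sqrt (2 * real d * real n) + 2 * real d"
proof -
  define s where "s = sqrt (2 * real d * real n)"
  define F where "F = (\<Sum>j<W. (W - j) div d)"
  have "0 \<le> s" and s_sq: "s * s = 2 * real d * real n"
    unfolding s_def by simp_all
  then have W: "real W \<le> s + 2 * real d" "s + 2 * real d < real W + 1"
    unfolding W_def s_def[symmetric] by linarith+
  show "real W \<le> sqrt (2 * real d * real n) + 2 * real d"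
    using W(1) unfolding s_def .
  show "d \<le> W"
    using W \<open>0 \<le> s\<close> by linarith
  have "1 \<le> real d"
    using assms(1) by simp
  then have "s * s \<le> real W * (real W + 3 - 2 * real d)"
    using W \<open>0 \<le> s\<close> by (intro mult_mono) auto
  also have "\<dots> \<le> 2 * real d * real F"
    using sum_div_lower_bound[OF assms(1), of W W, folded F_def] by (simp add: algebra_simps)
  finally have "real n \<le> real F"
    using s_sq assms(1) by simp
  then show "n \<le> (\<Sum>j<W. (W - j) div d)"
    unfolding F_def of_nat_le_iff .
qed

lemma degenerate_ordering:
  assumes "degenerate V E d"
  obtains f where "bij_betw f {..<card V} V"
    and "\<And>u. u < card V \<Longrightarrow> card {w. w < u \<and> E (f u) (f w)} \<le> d"
proof -
  obtain vs where vs: "distinct vs" "set vs = V"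
    and back_deg: "\<And>i. i < length vs \<Longrightarrow> card {j. j < i \<and> E (vs ! i) (vs ! j)} \<le> d"
    using assms unfolding degenerate_def by blast
  have "card V = length vs"
    using vs distinct_card by blast
  then show ?thesis
    using that[of "(!) vs"] bij_betw_nth[OF vs(1) _ vs(2)[symmetric]] back_deg by simp
qed

lemma degenerate_0_edgeless:
  assumes "simple_graph V E" "degenerate V E 0"
  shows "\<not> E u v"
proof
  assume uv: "E u v"
  obtain f where f: "bij_betw f {..<card V} V"
    and back_deg: "\<And>a. a < card V \<Longrightarrow> card {w. w < a \<and> E (f a) (f w)} \<le> 0"
    using degenerate_ordering[OF assms(2)] by metis
  have vu: "E v u" and "u \<in> V" "v \<in> V"
    using assms(1) uv unfolding simple_graph_def by blast+
  obtain a b where ab: "a < card V" "b < card V" "u = f a" "v = f b"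
    using f \<open>u \<in> V\<close> \<open>v \<in> V\<close> unfolding bij_betw_def by blast
  have no_back: "\<not> E (f a') (f b')" if "b' < a'" "a' < card V" for a' b'
  proof
    assume "E (f a') (f b')"
    then have "{w. w < a' \<and> E (f a') (f w)} \<noteq> {}"
      using that by blast
    moreover have "finite {w. w < a' \<and> E (f a') (f w)}"
      by simp
    ultimately have "0 < card {w. w < a' \<and> E (f a') (f w)}"
      using card_gt_0_iff by blast
    then show False
      using back_deg[OF that(2)] by simp
  qed
  have "a \<noteq> b"
    using assms(1) uv ab unfolding simple_graph_def by blast
  then show False
    using no_back[of b a] no_back[of a b] ab uv vu by (cases "b < a") auto
qed

lemma twin_width_edgeless:
  assumes "finite V" "\<And>u v. \<not> E u v"
  shows "twin_width V E = 0"
proof -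
  obtain f where f: "bij_betw f {..<card V} V"
    using ex_bij_betw_nat_finite[OF assms(1)] by (auto simp: atLeast0LessThan)
  have "twin_width V E \<le> 0"
  proof (rule twin_width_le_cut_sequence[OF f])
    show "{Suc 0..<card V} = {1..<card V}"
      by simp
    show "\<exists>c\<in>{Suc r..<card V}. {Suc (Suc r)..<card V} = {Suc r..<card V} - {c}" if "Suc r < card V" for r
      using that by (intro bexI[of _ "Suc r"]) auto
    show "red_degree (\<lambda>a b. E (f a) (f b)) (cut_blocks (card V) {Suc r..<card V}) B \<le> 0" for r B
      using assms(2) by (simp add: red_degree_edgeless)
  qed
  then show ?thesis
    by simp
qed

theorem mainTheorem4:
  fixes V :: "'a set" and E :: "'a \<Rightarrow> 'a \<Rightarrow> bool" and d :: nat
  assumes "simple_graph V E"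
    and "degenerate V E d"
  shows "real (twin_width V E) \<le> sqrt (2 * real d * real (card V)) + 2 * real d"
proof -
  obtain f where f: "bij_betw f {..<card V} V"
    and back_deg: "\<And>u. u < card V \<Longrightarrow> card {w. w < u \<and> E (f u) (f w)} \<le> d"
    using degenerate_ordering[OF assms(2)] by blast
  show ?thesis
  proof (cases "d = 0")
    case True
    have "finite V"
      using assms(1) by (simp add: simple_graph_def)
    moreover have "\<And>u v. \<not> E u v"
      using assms(2) unfolding True by (rule degenerate_0_edgeless[OF assms(1)])
    ultimately have "twin_width V E = 0"
      by (rule twin_width_edgeless)
    then show ?thesis
      by simp
  next
    case False
    define W where "W = nat \<lfloor>sqrt (2 * real d * real (card V)) + 2 * real d\<rfloor>"
    note bound = sqrt_width_bound[of d "card V", folded W_def]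
    interpret segment_sweep "card V" d W "\<lambda>a b. E (f a) (f b)"
      using back_deg False bound by unfold_locales auto
    have "twin_width V E \<le> W"
      using f sweep_cuts.simps(1) sweep_cuts_step red_degree_sweep_le by (rule twin_width_le_cut_sequence)
    then show ?thesis
      using bound(3) False by simp
  qed
qed

end
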